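(* Consider a block-fading channel with channel power gain $h(\nu)\ge0$ (a random variable with continuous pdf) at fading state $\nu$, constant transmit power $P>0$, and noise power $\sigma^2>0$. For a target $0\le\bar Q\le E_\nu[h(\nu)P]$, let Problem (P1) be: maximize over $\{\alpha(\nu)\}$ the quantity $E_\nu\big[\log\big(1+\frac{\alpha(\nu)h(\nu)P}{\sigma^2}\big)\big]$ subject to $E_\nu[(1-\alpha(\nu))h(\nu)P]\ge\bar Q$ and $0\le\alpha(\nu)\le1$ for all $\nu$. Let $\lambda^\ast\ge0$ be the optimal dual solution of (P1), i.e. a minimizer over $\lambda\ge0$ of the dual function $g(\lambda)=\max_{0\le\alpha(\nu)\le1}\big\{E_\nu[\log(1+\alpha(\nu)h(\nu)P/\sigma^2)]+\lambda\big(E_\nu[(1-\alpha(\nu))h(\nu)P]-\bar Q\big)\big\}$. Then the optimal solution of (P1) is $\alpha^\ast(\nu)=\frac{1}{\lambda^\ast h(\nu)P}-\frac{\sigma^2}{h(\nu)P}$ if $h(\nu)\ge\frac{1}{\lambda^\ast P}-\frac{\sigma^2}{P}$, and $\alpha^\ast(\nu)=1$ otherwise.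
   Context: $\log$ is the natural logarithm. $\alpha(\nu)$ is the fraction of the received power at fading state $\nu$ split to the information decoder; $1-\alpha(\nu)$ is split to the energy harvester. *)

theory Defs
  imports "HOL-Probability.Probability"
begin

definition split_policies :: "'a measure \<Rightarrow> ('a \<Rightarrow> real) set" where
  "split_policies M = {\<alpha>. \<alpha> \<in> borel_measurable M \<and> (\<forall>\<nu>\<in>space M. 0 \<le> \<alpha> \<nu> \<and> \<alpha> \<nu> \<le> 1)}"

definition avg_rate :: "'a measure \<Rightarrow> ('a \<Rightarrow> real) \<Rightarrow> real \<Rightarrow> real \<Rightarrow> ('a \<Rightarrow> real) \<Rightarrow> real" where
  "avg_rate M h P \<sigma> \<alpha> = (\<integral>\<nu>. ln (1 + \<alpha> \<nu> * h \<nu> * P / \<sigma>\<^sup>2) \<partial>M)"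

definition avg_harvest :: "'a measure \<Rightarrow> ('a \<Rightarrow> real) \<Rightarrow> real \<Rightarrow> ('a \<Rightarrow> real) \<Rightarrow> real" where
  "avg_harvest M h P \<alpha> = (\<integral>\<nu>. (1 - \<alpha> \<nu>) * h \<nu> * P \<partial>M)"

definition dual_fun :: "'a measure \<Rightarrow> ('a \<Rightarrow> real) \<Rightarrow> real \<Rightarrow> real \<Rightarrow> real \<Rightarrow> real \<Rightarrow> real" where
  "dual_fun M h P \<sigma> Q lam =
     (SUP \<alpha>\<in>split_policies M. avg_rate M h P \<sigma> \<alpha> + lam * (avg_harvest M h P \<alpha> - Q))"

definition P1_optimal :: "'a measure \<Rightarrow> ('a \<Rightarrow> real) \<Rightarrow> real \<Rightarrow> real \<Rightarrow> real \<Rightarrow> ('a \<Rightarrow> real) \<Rightarrow> bool" where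
  "P1_optimal M h P \<sigma> Q \<alpha> \<longleftrightarrow>
     \<alpha> \<in> split_policies M \<and> avg_harvest M h P \<alpha> \<ge> Q \<and>
     (\<forall>\<beta>\<in>split_policies M. avg_harvest M h P \<beta> \<ge> Q \<longrightarrow>
        avg_rate M h P \<sigma> \<beta> \<le> avg_rate M h P \<sigma> \<alpha>)"

end

theory Submission
  imports Defs
begin

(* The Lagrangian of (P1) decouples over fading states: for a multiplier \<lambda> > 0, the pointwise
   maximiser of ln (1 + \<alpha> x / \<sigma>^2) + \<lambda> (1 - \<alpha>) x over \<alpha> \<in> [0,1] fills the received power x
   up to the water level 1/\<lambda> - \<sigma>^2.  So the dual function is attained at this water-filling
   policy, and its harvested power minus Q is a subgradient of the dual function that depends
   continuously on \<lambda> (dominated convergence).  At the minimiser \<lambda>* this yields primal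
   feasibility and complementary slackness, and weak duality makes the water-filling policy
   optimal.  Uniqueness of \<lambda>* excludes \<lambda>* > 1/\<sigma>^2, where the dual function is nondecreasing and
   the closed form of the theorem would leave [0,1]. *)

lemma ln_diff_le_divide: "0 < a \<Longrightarrow> 0 < b \<Longrightarrow> ln a - ln b \<le> (a - b) / b"
  for a b :: real
  using ln_le_minus_one[of "a / b"] by (simp add: ln_div diff_divide_distrib)

lemma continuous_on_integral_dominated:
  fixes F :: "'p::{first_countable_topology, t2_space} \<Rightarrow> 'a \<Rightarrow> 'b::{banach, second_countable_topology}"
  assumes meas: "\<And>t. t \<in> S \<Longrightarrow> F t \<in> borel_measurable M"
    and w: "integrable M w" and bound: "\<And>t x. t \<in> S \<Longrightarrow> x \<in> space M \<Longrightarrow> norm (F t x) \<le> w x"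
    and cont: "\<And>x. x \<in> space M \<Longrightarrow> continuous_on S (\<lambda>t. F t x)"
  shows "continuous_on S (\<lambda>t. \<integral>x. F t x \<partial>M)"
proof (rule continuous_on_sequentiallyI)
  fix u :: "nat \<Rightarrow> 'p" and a assume u: "\<forall>n. u n \<in> S" and a: "a \<in> S" and lim: "u \<longlonglongrightarrow> a"
  have "AE x in M. (\<lambda>n. F (u n) x) \<longlonglongrightarrow> F a x"
    using cont continuous_on_tendsto_compose[OF _ lim a] u by (auto simp: o_def)
  then show "(\<lambda>n. \<integral>x. F (u n) x \<partial>M) \<longlonglongrightarrow> \<integral>x. F a x \<partial>M"
    using meas bound u a w by (intro integral_dominated_convergence[where w = w]) auto
qed

lemma minimizer_subgradient_sign:
  fixes g s :: "real \<Rightarrow> real"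
  assumes sub: "\<And>l m. 0 \<le> l \<Longrightarrow> 0 \<le> m \<Longrightarrow> g l + (m - l) * s l \<le> g m"
    and cont: "continuous_on {0..} s"
    and l0: "0 \<le> l0" and min: "\<And>m. 0 \<le> m \<Longrightarrow> g l0 \<le> g m"
  shows "0 \<le> s l0" and "0 < l0 \<Longrightarrow> s l0 \<le> 0"
proof -
  have sign: "(l0 - m) * s m \<le> 0" if "0 \<le> m" for m
    using sub[OF that l0] min[OF that] by simp
  have lim: "(s \<longlongrightarrow> s l0) (at l0 within {0..})"
    using cont l0 by (simp add: continuous_on_def)
  have "(s \<longlongrightarrow> s l0) (at_right l0)"
    by (rule tendsto_within_subset[OF lim]) (use l0 in auto)
  moreover have "\<forall>\<^sub>F m in at_right l0. 0 \<le> s m"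
  proof (rule eventually_at_rightI[of l0 "l0 + 1"])
    fix m assume "m \<in> {l0<..<l0 + 1}"
    then show "0 \<le> s m" using sign[of m] l0 by (auto simp: mult_le_0_iff)
  qed simp
  ultimately show "0 \<le> s l0"
    by (rule tendsto_lowerbound) simp
  assume "0 < l0"
  then have "at l0 within {0..} = at l0"
    by (intro at_within_interior) simp
  then have "(s \<longlongrightarrow> s l0) (at l0)"
    using lim by simp
  then have "(s \<longlongrightarrow> s l0) (at_left l0)"
    by (simp add: filterlim_at_split)
  moreover have "\<forall>\<^sub>F m in at_left l0. s m \<le> 0"
  proof (rule eventually_at_leftI[of 0])
    fix m assume "m \<in> {0<..<l0}"
    then show "s m \<le> 0" using sign[of m] by (auto simp: mult_le_0_iff)
  qed fact
  ultimately show "s l0 \<le> 0"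
    by (rule tendsto_upperbound) simp
qed

(* The test x < 1 / lam - s is redundant except at x = 0, where it reproduces the value 1
   of the threshold form instead of the clipped 0 / 0 = 0. *)
definition water_filling :: "real \<Rightarrow> real \<Rightarrow> real \<Rightarrow> real" where
  "water_filling s lam x =
     (if lam = 0 \<or> x < 1 / lam - s then 1 else max 0 (min 1 ((1 / lam - s) / x)))"

lemma water_filling_bounds: "0 \<le> water_filling s lam x" "water_filling s lam x \<le> 1"
  by (simp_all add: water_filling_def)

lemma water_filling_mult:
  assumes "lam \<noteq> 0" "0 \<le> x"
  shows "water_filling s lam x * x = max 0 (min (1 / lam - s) x)"
proof (cases "x = 0")
  case False
  with assms have "0 < x" by simp
  then show ?thesis using assms
    by (auto simp: water_filling_def max_mult_distrib_right min_mult_distrib_right)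
qed (auto simp: water_filling_def)

lemma water_filling_maximizes_lagrangian:
  fixes s lam x b :: real
  assumes s: "0 < s" and lam: "0 \<le> lam" and x: "0 \<le> x" and b: "0 \<le> b" "b \<le> 1"
  shows "ln (1 + b * x / s) + lam * ((1 - b) * x)
       \<le> ln (1 + water_filling s lam x * x / s) + lam * ((1 - water_filling s lam x) * x)"
proof (cases "lam = 0")
  case True
  have "b * x \<le> x" using b x by (simp add: mult_left_le_one_le)
  then have "b * x / s \<le> x / s" using s by (simp add: divide_right_mono)
  moreover have "0 \<le> b * x / s" using s b x by simp
  ultimately show ?thesis using True s by (simp add: water_filling_def add_pos_nonneg)
next
  case False
  then have lam_pos: "0 < lam" using lam by simp
  define t where "t = water_filling s lam x * x"
  have t: "t = max 0 (min (1 / lam - s) x)"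
    unfolding t_def using water_filling_mult False x by simp
  have t_nonneg: "0 \<le> t" using t by simp
  have st_pos: "0 < s + t" using s t_nonneg by simp
  have "ln (1 + b * x / s) - ln (1 + t / s) \<le> ((1 + b * x / s) - (1 + t / s)) / (1 + t / s)"
    using s b x t_nonneg by (intro ln_diff_le_divide) (auto intro: add_pos_nonneg)
  also have "\<dots> = (b * x - t) / (s + t)"
    using s st_pos by (simp add: divide_simps)
  also have "\<dots> \<le> lam * (b * x - t)"
  proof -
    \<comment> \<open>\<open>t < b * x\<close> only if \<open>t\<close> is at least the water level, \<open>t > b * x\<close> only if it is capped by it\<close>
    have "(b * x - t) * (1 / (s + t) - lam) \<le> 0"
    proof (cases "b * x \<le> t")
      case True
      show ?thesis
      proof (cases "b * x = t")
        case False
        moreover have "0 \<le> b * x" using b x by simp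
        ultimately have "0 < t" using True by linarith
        then have "s + t \<le> 1 / lam" using t by auto
        then have "lam \<le> 1 / (s + t)" using st_pos lam_pos by (simp add: field_simps)
        then show ?thesis using True by (simp add: mult_nonpos_nonneg)
      qed simp
    next
      case False
      have "b * x \<le> x" using b x by (simp add: mult_left_le_one_le)
      then have "1 / lam \<le> s + t" using False t by auto
      then have "1 / (s + t) \<le> lam" using s t lam_pos by (simp add: field_simps)
      then show ?thesis using False by (simp add: mult_nonneg_nonpos)
    qed
    then show ?thesis using st_pos by (simp add: field_simps)
  qed
  finally show ?thesis by (simp add: t_def algebra_simps)
qed

lemma water_filling_harvest:
  assumes "0 \<le> x"
  shows "(1 - water_filling s lam x) * x = (if lam = 0 then 0 else max 0 (x - max 0 (1 / lam - s)))"
proof (cases "lam = 0")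
  case False
  then have "(1 - water_filling s lam x) * x = x - max 0 (min (1 / lam - s) x)"
    using assms water_filling_mult[of lam x s] by (simp add: algebra_simps)
  then show ?thesis using False assms by (auto simp: max_def min_def)
qed (simp add: water_filling_def)

lemma continuous_on_water_filling_harvest:
  assumes x: "0 \<le> x"
  shows "continuous_on {0..} (\<lambda>lam. (1 - water_filling s lam x) * x)"
  unfolding continuous_on_eq_continuous_within
proof (intro ballI)
  fix lam0 :: real assume "lam0 \<in> {0..}"
  show "continuous (at lam0 within {0..}) (\<lambda>lam. (1 - water_filling s lam x) * x)"
  proof (cases "lam0 = 0")
    case True
    \<comment> \<open>below 1/(x + |s| + 1) the water level exceeds x, so nothing is harvested\<close>
    have "\<forall>\<^sub>F lam in at 0 within {0..}. (1 - water_filling s lam x) * x = 0"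
      unfolding eventually_at
    proof (intro exI[of _ "1 / (x + \<bar>s\<bar> + 1)"] conjI ballI impI)
      show "0 < 1 / (x + \<bar>s\<bar> + 1)" using x by simp
      fix lam :: real assume "lam \<in> {0..}" and "lam \<noteq> 0 \<and> dist lam 0 < 1 / (x + \<bar>s\<bar> + 1)"
      then have "0 < lam" "lam * (x + \<bar>s\<bar> + 1) < 1" using x by (auto simp: field_simps)
      moreover have "lam * s \<le> lam * \<bar>s\<bar>" using \<open>0 < lam\<close> by (intro mult_left_mono) auto
      ultimately have "lam * x + lam * s < 1" by (simp only: algebra_simps)
      then have "x < 1 / lam - s" using \<open>0 < lam\<close> by (simp add: field_simps)
      then show "(1 - water_filling s lam x) * x = 0" using x by (simp add: water_filling_harvest)
    qed
    then show ?thesis using True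
      unfolding continuous_within by (simp add: water_filling_def tendsto_eventually)
  next
    case False
    then have "0 < lam0" using \<open>lam0 \<in> {0..}\<close> by simp
    have "continuous_on {0<..} (\<lambda>lam. max 0 (x - max 0 (1 / lam - s)))"
      by (intro continuous_intros) auto
    then have "continuous_on {0<..} (\<lambda>lam. (1 - water_filling s lam x) * x)"
      by (rule continuous_on_cong[THEN iffD1, rotated 2]) (auto simp: water_filling_harvest x)
    then have "isCont (\<lambda>lam. (1 - water_filling s lam x) * x) lam0"
      using \<open>0 < lam0\<close> by (simp add: continuous_on_eq_continuous_at)
    then show ?thesis by (rule continuous_at_imp_continuous_within)
  qed
qed

lemma threshold_form_eq_water_filling:
  assumes P: "0 < P" and s: "0 < s" and lam: "0 \<le> lam" "lam \<le> 1 / s"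
  shows "(if 0 < lam \<and> 1 / (lam * P) - s / P \<le> v then 1 / (lam * v * P) - s / (v * P) else 1)
         = water_filling s lam (v * P)"
proof (cases "lam = 0")
  case False
  then have lam_pos: "0 < lam" using lam by simp
  have level: "0 \<le> 1 / lam - s" using lam_pos s lam by (simp add: field_simps)
  have "1 / (lam * P) - s / P \<le> v \<longleftrightarrow> 1 / lam - s \<le> v * P"
    using P by (simp add: field_simps)
  moreover have "1 / (lam * v * P) - s / (v * P) = (1 / lam - s) / (v * P)"
    by (simp add: diff_divide_distrib)
  moreover have "(1 / lam - s) / (v * P) \<le> 1" if "1 / lam - s \<le> v * P"
    using that level by (cases "v * P = 0") (auto simp: divide_le_eq)
  ultimately show ?thesis using lam_pos level
    by (auto simp: water_filling_def not_less)
qed (simp add: water_filling_def)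

locale fading_channel = prob_space M for M :: "'a measure" +
  fixes h :: "'a \<Rightarrow> real" and P \<sigma> :: real
  assumes h_nonneg: "\<And>\<nu>. \<nu> \<in> space M \<Longrightarrow> 0 \<le> h \<nu>"
    and integrable_h: "integrable M h"
    and P_pos: "0 < P" and \<sigma>_pos: "0 < \<sigma>"
begin

lemma h_measurable[measurable]: "h \<in> borel_measurable M"
  using integrable_h by auto

lemma received_power_nonneg: "\<nu> \<in> space M \<Longrightarrow> 0 \<le> h \<nu> * P"
  using h_nonneg P_pos by simp

definition water_filling_policy :: "real \<Rightarrow> 'a \<Rightarrow> real" where
  "water_filling_policy lam \<nu> = water_filling (\<sigma>\<^sup>2) lam (h \<nu> * P)"

lemma water_filling_policy_split: "water_filling_policy lam \<in> split_policies M"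
  unfolding split_policies_def water_filling_policy_def
  by (auto simp: water_filling_bounds) (simp add: water_filling_def)

lemma split_policy_bounds:
  "\<beta> \<in> split_policies M \<Longrightarrow> \<nu> \<in> space M \<Longrightarrow> 0 \<le> \<beta> \<nu> \<and> \<beta> \<nu> \<le> 1"
  unfolding split_policies_def by blast

lemma split_policy_measurable: "\<beta> \<in> split_policies M \<Longrightarrow> \<beta> \<in> borel_measurable M"
  unfolding split_policies_def by blast

lemma integrable_rate:
  assumes \<beta>: "\<beta> \<in> split_policies M"
  shows "integrable M (\<lambda>\<nu>. ln (1 + \<beta> \<nu> * h \<nu> * P / \<sigma>\<^sup>2))"
proof (rule Bochner_Integration.integrable_bound)
  show "integrable M (\<lambda>\<nu>. h \<nu> * P / \<sigma>\<^sup>2)" using integrable_h by simp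
  note [measurable] = split_policy_measurable[OF \<beta>]
  show "(\<lambda>\<nu>. ln (1 + \<beta> \<nu> * h \<nu> * P / \<sigma>\<^sup>2)) \<in> borel_measurable M"
    by measurable
  show "AE \<nu> in M. norm (ln (1 + \<beta> \<nu> * h \<nu> * P / \<sigma>\<^sup>2)) \<le> norm (h \<nu> * P / \<sigma>\<^sup>2)"
  proof (rule AE_I2)
    fix \<nu> assume \<nu>: "\<nu> \<in> space M"
    define y where "y = \<beta> \<nu> * h \<nu> * P / \<sigma>\<^sup>2"
    have "0 \<le> \<beta> \<nu> * (h \<nu> * P)" "\<beta> \<nu> * (h \<nu> * P) \<le> h \<nu> * P"
      using split_policy_bounds[OF \<beta> \<nu>] received_power_nonneg[OF \<nu>]
      by (auto simp: mult_left_le_one_le)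
    then have "0 \<le> y" "y \<le> h \<nu> * P / \<sigma>\<^sup>2"
      unfolding y_def by (simp_all add: mult.assoc divide_right_mono)
    then show "norm (ln (1 + \<beta> \<nu> * h \<nu> * P / \<sigma>\<^sup>2)) \<le> norm (h \<nu> * P / \<sigma>\<^sup>2)"
      using ln_add_one_self_le_self[of y] received_power_nonneg[OF \<nu>]
      unfolding y_def[symmetric] by simp
  qed
qed

lemma integrable_harvest:
  assumes \<beta>: "\<beta> \<in> split_policies M"
  shows "integrable M (\<lambda>\<nu>. (1 - \<beta> \<nu>) * h \<nu> * P)"
proof (rule Bochner_Integration.integrable_bound)
  show "integrable M (\<lambda>\<nu>. h \<nu> * P)" using integrable_h by simp
  note [measurable] = split_policy_measurable[OF \<beta>]
  show "(\<lambda>\<nu>. (1 - \<beta> \<nu>) * h \<nu> * P) \<in> borel_measurable M"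
    by measurable
  show "AE \<nu> in M. norm ((1 - \<beta> \<nu>) * h \<nu> * P) \<le> norm (h \<nu> * P)"
    using split_policy_bounds[OF \<beta>] received_power_nonneg
    by (intro AE_I2) (auto simp: mult.assoc mult_left_le_one_le)
qed

lemma lagrangian_le_water_filling:
  assumes \<beta>: "\<beta> \<in> split_policies M" and lam: "0 \<le> lam"
  shows "avg_rate M h P \<sigma> \<beta> + lam * avg_harvest M h P \<beta>
       \<le> avg_rate M h P \<sigma> (water_filling_policy lam)
         + lam * avg_harvest M h P (water_filling_policy lam)"
proof -
  have lagrangian: "avg_rate M h P \<sigma> \<alpha> + lam * avg_harvest M h P \<alpha>
      = (\<integral>\<nu>. ln (1 + \<alpha> \<nu> * h \<nu> * P / \<sigma>\<^sup>2) + lam * ((1 - \<alpha> \<nu>) * h \<nu> * P) \<partial>M)"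
    if "\<alpha> \<in> split_policies M" for \<alpha>
    using integrable_rate[OF that] integrable_harvest[OF that]
    by (simp add: avg_rate_def avg_harvest_def)
  show ?thesis
    unfolding lagrangian[OF \<beta>] lagrangian[OF water_filling_policy_split]
  proof (rule integral_mono)
    fix \<nu> assume \<nu>: "\<nu> \<in> space M"
    show "ln (1 + \<beta> \<nu> * h \<nu> * P / \<sigma>\<^sup>2) + lam * ((1 - \<beta> \<nu>) * h \<nu> * P)
        \<le> ln (1 + water_filling_policy lam \<nu> * h \<nu> * P / \<sigma>\<^sup>2)
           + lam * ((1 - water_filling_policy lam \<nu>) * h \<nu> * P)"
      using water_filling_maximizes_lagrangian[of "\<sigma>\<^sup>2" lam "h \<nu> * P" "\<beta> \<nu>"]
        split_policy_bounds[OF \<beta> \<nu>] received_power_nonneg[OF \<nu>] \<sigma>_pos lam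
      by (simp add: water_filling_policy_def mult.assoc)
  qed (use \<beta> water_filling_policy_split integrable_rate integrable_harvest in auto)
qed

lemma dual_fun_eq:
  assumes "0 \<le> lam"
  shows "dual_fun M h P \<sigma> Q lam = avg_rate M h P \<sigma> (water_filling_policy lam)
           + lam * (avg_harvest M h P (water_filling_policy lam) - Q)"
  unfolding dual_fun_def
proof (rule cSup_eq_maximum)
  fix r assume "r \<in> (\<lambda>\<alpha>. avg_rate M h P \<sigma> \<alpha> + lam * (avg_harvest M h P \<alpha> - Q)) ` split_policies M"
  then show "r \<le> avg_rate M h P \<sigma> (water_filling_policy lam)
           + lam * (avg_harvest M h P (water_filling_policy lam) - Q)"
    using lagrangian_le_water_filling assms by (auto simp: algebra_simps)
qed (use water_filling_policy_split in auto)

lemma dual_fun_subgradient: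
  assumes "0 \<le> lam" "0 \<le> mu"
  shows "dual_fun M h P \<sigma> Q lam + (mu - lam) * (avg_harvest M h P (water_filling_policy lam) - Q)
         \<le> dual_fun M h P \<sigma> Q mu"
  using lagrangian_le_water_filling[OF water_filling_policy_split, of mu lam] assms
  by (simp add: dual_fun_eq algebra_simps)

lemma continuous_on_harvest_water_filling:
  "continuous_on {0..} (\<lambda>lam. avg_harvest M h P (water_filling_policy lam))"
  unfolding avg_harvest_def water_filling_policy_def mult.assoc[of _ "h _"]
proof (rule continuous_on_integral_dominated)
  show "integrable M (\<lambda>\<nu>. h \<nu> * P)" using integrable_h by simp
  fix lam \<nu> assume \<nu>: "\<nu> \<in> space M"
  show "norm ((1 - water_filling (\<sigma>\<^sup>2) lam (h \<nu> * P)) * (h \<nu> * P)) \<le> h \<nu> * P"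
    using water_filling_bounds[of "\<sigma>\<^sup>2" lam "h \<nu> * P"] received_power_nonneg[OF \<nu>]
    by (simp add: mult_left_le_one_le)
  show "continuous_on {0..} (\<lambda>lam. (1 - water_filling (\<sigma>\<^sup>2) lam (h \<nu> * P)) * (h \<nu> * P))"
    using received_power_nonneg[OF \<nu>] by (rule continuous_on_water_filling_harvest)
qed (simp add: water_filling_def)

lemma harvest_water_filling_saturated:
  assumes "1 / \<sigma>\<^sup>2 \<le> lam"
  shows "avg_harvest M h P (water_filling_policy lam) = (\<integral>\<nu>. h \<nu> * P \<partial>M)"
  unfolding avg_harvest_def
proof (rule Bochner_Integration.integral_cong[OF refl])
  fix \<nu> assume \<nu>: "\<nu> \<in> space M"
  have "0 < 1 / \<sigma>\<^sup>2" using \<sigma>_pos by simp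
  then have "0 < lam" using assms by linarith
  then have "1 / lam - \<sigma>\<^sup>2 \<le> 0" using assms \<sigma>_pos by (simp add: field_simps)
  then show "(1 - water_filling_policy lam \<nu>) * h \<nu> * P = h \<nu> * P"
    using water_filling_harvest[OF received_power_nonneg[OF \<nu>], of "\<sigma>\<^sup>2" lam] \<open>0 < lam\<close>
      received_power_nonneg[OF \<nu>]
    by (simp add: water_filling_policy_def mult.assoc)
qed

lemma P1_optimal_water_filling:
  assumes lam: "0 \<le> lam"
    and feasible: "Q \<le> avg_harvest M h P (water_filling_policy lam)"
    and slackness: "lam * (avg_harvest M h P (water_filling_policy lam) - Q) = 0"
  shows "P1_optimal M h P \<sigma> Q (water_filling_policy lam)"
  unfolding P1_optimal_def
proof (intro conjI ballI impI water_filling_policy_split feasible)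
  fix \<beta> assume \<beta>: "\<beta> \<in> split_policies M" and "Q \<le> avg_harvest M h P \<beta>"
  then have "lam * Q \<le> lam * avg_harvest M h P \<beta>" using lam by (simp add: mult_left_mono)
  moreover have "lam * avg_harvest M h P (water_filling_policy lam) = lam * Q"
    using slackness by (simp add: algebra_simps)
  ultimately show "avg_rate M h P \<sigma> \<beta> \<le> avg_rate M h P \<sigma> (water_filling_policy lam)"
    using lagrangian_le_water_filling[OF \<beta> lam] by linarith
qed

lemma dual_minimizer_kkt:
  assumes lam0: "0 \<le> lam0" and min: "\<And>lam. 0 \<le> lam \<Longrightarrow> dual_fun M h P \<sigma> Q lam0 \<le> dual_fun M h P \<sigma> Q lam"
  shows "Q \<le> avg_harvest M h P (water_filling_policy lam0)"
    and "lam0 * (avg_harvest M h P (water_filling_policy lam0) - Q) = 0"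
proof -
  let ?slack = "\<lambda>lam. avg_harvest M h P (water_filling_policy lam) - Q"
  have "continuous_on {0..} ?slack"
    using continuous_on_harvest_water_filling by (intro continuous_on_diff continuous_on_const)
  then have "0 \<le> ?slack lam0" and "0 < lam0 \<Longrightarrow> ?slack lam0 \<le> 0"
    using minimizer_subgradient_sign[OF dual_fun_subgradient _ lam0 min] by blast+
  then show "Q \<le> avg_harvest M h P (water_filling_policy lam0)" and "lam0 * ?slack lam0 = 0"
    using lam0 by (cases "lam0 = 0"; simp)+
qed

lemma unique_dual_minimizer_le:
  assumes Q: "Q \<le> (\<integral>\<nu>. h \<nu> * P \<partial>M)" and lam0: "0 \<le> lam0"
    and min: "\<And>lam. 0 \<le> lam \<Longrightarrow> dual_fun M h P \<sigma> Q lam0 \<le> dual_fun M h P \<sigma> Q lam"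
    and unique: "\<And>lam. 0 \<le> lam \<Longrightarrow> dual_fun M h P \<sigma> Q lam = dual_fun M h P \<sigma> Q lam0 \<Longrightarrow> lam = lam0"
  shows "lam0 \<le> 1 / \<sigma>\<^sup>2"
proof (rule ccontr)
  \<comment> \<open>once the water level drops below zero all power is harvested and the dual function is nondecreasing\<close>
  let ?g = "dual_fun M h P \<sigma> Q" and ?l = "1 / \<sigma>\<^sup>2"
  assume above: "\<not> lam0 \<le> ?l"
  have "?g ?l + (lam0 - ?l) * (avg_harvest M h P (water_filling_policy ?l) - Q) \<le> ?g lam0"
    using lam0 by (intro dual_fun_subgradient) simp_all
  moreover have "0 \<le> (lam0 - ?l) * (avg_harvest M h P (water_filling_policy ?l) - Q)"
    using above Q by (simp add: harvest_water_filling_saturated)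
  ultimately have "?g ?l = ?g lam0"
    using min[of ?l] by simp
  then have "?l = lam0"
    by (intro unique) simp_all
  with above show False by simp
qed

end

theorem proposition4p1:
  fixes M :: "'a measure" and h :: "'a \<Rightarrow> real" and f :: "real \<Rightarrow> real"
    and P \<sigma> Q lams :: real
  assumes "prob_space M"
    and h_dist: "distributed M lborel h (\<lambda>x. ennreal (f x))"
    and f_cont: "continuous_on {0..} f"
    and h_nonneg: "\<forall>\<nu>\<in>space M. 0 \<le> h \<nu>"
    and h_int: "integrable M h"
    and P_pos: "P > 0" and \<sigma>_pos: "\<sigma> > 0"
    and Q_bounds: "0 \<le> Q" "Q \<le> (\<integral>\<nu>. h \<nu> * P \<partial>M)"
    and lams_nonneg: "lams \<ge> 0"
    and lams_min: "\<forall>lam\<ge>0. dual_fun M h P \<sigma> Q lams \<le> dual_fun M h P \<sigma> Q lam"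
    and lams_unique: "\<forall>lam\<ge>0. dual_fun M h P \<sigma> Q lam = dual_fun M h P \<sigma> Q lams \<longrightarrow> lam = lams"
  shows "P1_optimal M h P \<sigma> Q
           (\<lambda>\<nu>. if lams > 0 \<and> h \<nu> \<ge> 1 / (lams * P) - \<sigma>\<^sup>2 / P
                 then 1 / (lams * h \<nu> * P) - \<sigma>\<^sup>2 / (h \<nu> * P)
                 else 1)"
proof -
  interpret fading_channel M h P \<sigma>
    by (intro fading_channel.intro fading_channel_axioms.intro)
      (use assms(1) h_nonneg h_int P_pos \<sigma>_pos in auto)
  have min: "\<And>lam. 0 \<le> lam \<Longrightarrow> dual_fun M h P \<sigma> Q lams \<le> dual_fun M h P \<sigma> Q lam"
    using lams_min by simp
  have "lams \<le> 1 / \<sigma>\<^sup>2"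
    using unique_dual_minimizer_le[OF Q_bounds(2) lams_nonneg min] lams_unique by simp
  then have "(\<lambda>\<nu>. if lams > 0 \<and> h \<nu> \<ge> 1 / (lams * P) - \<sigma>\<^sup>2 / P
                 then 1 / (lams * h \<nu> * P) - \<sigma>\<^sup>2 / (h \<nu> * P) else 1)
        = water_filling_policy lams"
    using threshold_form_eq_water_filling[OF P_pos _ lams_nonneg] \<sigma>_pos
    by (simp add: water_filling_policy_def fun_eq_iff)
  then show ?thesis
    using P1_optimal_water_filling[OF lams_nonneg dual_minimizer_kkt[OF lams_nonneg min]] by simp
qed

end
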